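(* For $n\geq 3$ and $l\in\mathbb{N}$ let $Q^n_l=\operatorname{conv}\{\,l C_{n-1}\times\{0\},\ \pm e_n\}\subset\mathbb{R}^n$, where $C_{n-1}=[-1,1]^{n-1}$ and $e_n$ is the $n$th standard unit vector. Then for every constant $c$ there exists $l\in\mathbb{N}$ such that $\mathrm{g}_{n-2}(Q^n_l)> c\,\sigma_{n-2}(Q^n_l)$. If $n\geq 4$, then likewise for every constant $c$ there exists $l\in\mathbb{N}$ such that $\mathrm{g}_{n-3}(Q^n_l)> c\,\sigma_{n-3}(Q^n_l)$.
   Context: For a lattice polytope $P\subset\mathbb{R}^n$ (all vertices in $\mathbb{Z}^n$) of dimension $n$, the function $k\mapsto \mathrm{G}(kP)=\#(kP\cap\mathbb{Z}^n)$, $k\in\mathbb{N}$, is a polynomial of degree $n$ (Ehrhart); write $\mathrm{G}(kP)=\sum_{i=0}^n \mathrm{g}_i(P)k^i$. For a $0$-symmetric convex body $K\subset\mathbb{R}^n$ (compact, convex, nonempty interior) and a lattice $\Lambda$, the successive minima are $\lambda_i(K,\Lambda)=\min\{\lambda>0:\dim(\lambda K\cap\Lambda)\geq i\}$, $1\le i\le n$, where $\dim$ is the dimension of the affine hull; $\lambda_i(K)=\lambda_i(K,\mathbb{Z}^n)$. For a polytope $P$, $DP=P-P$ and $\sigma_i(P)=\sigma_i\big(1/\lambda_1(DP),\dots,1/\lambda_n(DP)\big)$, where $\sigma_i(x_1,\dots,x_n)=\sum_{I\subseteq\{1,\dots,n\},\#I=i}\prod_{j\in I}x_j$ is the $i$th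 elementary symmetric polynomial. *)

theory Defs
  imports "HOL-Analysis.Analysis"
begin

definition int_lattice :: "(real ^ 'n) set" where
  "int_lattice = {x. \<forall>i. x $ i \<in> \<int>}"

definition lattice_count :: "(real ^ 'n) set \<Rightarrow> nat" where
  "lattice_count K = card (K \<inter> int_lattice)"

definition ehrhart_coeff :: "(real ^ 'n) set \<Rightarrow> nat \<Rightarrow> real" where
  "ehrhart_coeff P i = (THE c. \<exists>a :: nat \<Rightarrow> real.
      (\<forall>k::nat. real (lattice_count ((\<lambda>v. real k *\<^sub>R v) ` P)) = (\<Sum>j\<le>CARD('n). a j * real k ^ j))
      \<and> a i = c)"

definition succ_min :: "(real ^ 'n) set \<Rightarrow> nat \<Rightarrow> real" where
  "succ_min K i = Inf {t. t > 0 \<and> aff_dim (((\<lambda>v. t *\<^sub>R v) ` K) \<inter> int_lattice) \<ge> int i}"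

definition diff_body :: "(real ^ 'n) set \<Rightarrow> (real ^ 'n) set" where
  "diff_body P = {x - y | x y. x \<in> P \<and> y \<in> P}"

definition elem_sym :: "nat \<Rightarrow> (nat \<Rightarrow> real) \<Rightarrow> nat \<Rightarrow> real" where
  "elem_sym n x i = (\<Sum>I\<in>{I. I \<subseteq> {1..n} \<and> card I = i}. \<Prod>j\<in>I. x j)"

definition sigma_sm :: "(real ^ 'n) set \<Rightarrow> nat \<Rightarrow> real" where
  "sigma_sm P i = elem_sym CARD('n) (\<lambda>j. 1 / succ_min (diff_body P) j) i"

text \<open>Q^n_l = conv{ l C_{n-1} x {0}, +-e_k }, with the distinguished coordinate k playing
  the role of the n-th coordinate.\<close>
definition Q_poly :: "'n \<Rightarrow> nat \<Rightarrow> (real ^ 'n) set" where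
  "Q_poly k l = convex hull ({x. x $ k = 0 \<and> (\<forall>j. j \<noteq> k \<longrightarrow> \<bar>x $ j\<bar> \<le> real l)}
                              \<union> {axis k 1, axis k (-1)})"

end

theory Submission
  imports Defs "HOL-Computational_Algebra.Polynomial"
begin

text \<open>
  Q is the bipyramid |x_n| <= 1, |x_j| <= l (1 - |x_n|). Slicing its s-th dilate at the integer
  heights h gives cubes of side 2l(s - |h|), so G(sQ) = (2ls + 1)^(n-1) + 2 sum_{m<s} (2lm + 1)^(n-1).
  The forward difference G((s+1)Q) - G(sQ) = (2l(s+1) + 1)^(n-1) + (2ls + 1)^(n-1) is explicit, and
  comparing its coefficients with those of the difference of the Ehrhart polynomial gives a
  triangular system for the top coefficients: with u = 2l,
  g_(n-2) = (n-1) u^(n-3) (u^2/6 + 1) and g_(n-3) = (n-1)(n-2) u^(n-4) (u^2/6 + 1/3),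
  both of order l^(n-1). On the other hand DQ lies in the cube [-2l, 2l]^n and contains the unit
  vectors, so lambda_i(DQ) >= 1/(2l) and sigma_i(Q) <= (n choose i) (2l)^i. Hence g_i / sigma_i
  grows linearly in l for i = n-2 and i = n-3.
\<close>

definition has_poly_coeffs :: "(nat \<Rightarrow> real) \<Rightarrow> nat \<Rightarrow> (nat \<Rightarrow> real) \<Rightarrow> bool" where
  "has_poly_coeffs f N a \<longleftrightarrow> (\<forall>s. f s = (\<Sum>i\<le>N. a i * real s ^ i))"

lemma has_poly_coeffs_unique:
  assumes "has_poly_coeffs f N a" "has_poly_coeffs f N b" "j \<le> N"
  shows "a j = b j"
proof -
  define P where "P = (\<Sum>i\<le>N. monom (a i - b i) i)"
  have "poly P (real s) = 0" for s
    using assms(1,2) by (simp add: P_def has_poly_coeffs_def poly_sum poly_monom algebra_simps sum_subtractf)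
  hence "range real \<subseteq> {x. poly P x = 0}" by auto
  moreover have "infinite (range (real :: nat \<Rightarrow> real))"
    by (simp add: range_inj_infinite inj_on_def)
  ultimately have "P = 0" using finite_subset poly_roots_finite by blast
  hence "coeff P j = 0" by simp
  thus ?thesis using \<open>j \<le> N\<close> by (simp add: P_def coeff_sum coeff_monom)
qed

lemma has_poly_coeffs_add:
  assumes "has_poly_coeffs f N a" "has_poly_coeffs g N b"
  shows "has_poly_coeffs (\<lambda>s. f s + g s) N (\<lambda>i. a i + b i)"
  using assms by (simp add: has_poly_coeffs_def sum.distrib distrib_right)

lemma has_poly_coeffs_cmult:
  assumes "has_poly_coeffs f N a"
  shows "has_poly_coeffs (\<lambda>s. c * f s) N (\<lambda>i. c * a i)"
  using assms by (simp add: has_poly_coeffs_def sum_distrib_left mult.assoc)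

lemma has_poly_coeffs_lincomb:
  assumes "\<And>x. x \<in> A \<Longrightarrow> has_poly_coeffs (f x) N (a x)"
  shows "has_poly_coeffs (\<lambda>s. \<Sum>x\<in>A. c x * f x s) N (\<lambda>i. \<Sum>x\<in>A. c x * a x i)"
  using assms unfolding has_poly_coeffs_def
  by (simp add: sum_distrib_left sum_distrib_right mult.assoc sum.swap[of _ A])

lemma has_poly_coeffs_power:
  assumes "t \<le> N"
  shows "has_poly_coeffs (\<lambda>s. real s ^ t) N (\<lambda>i. if i = t then 1 else 0)"
proof -
  have "(if i = t then 1 else 0) * x = (if i = t then x else 0)" for i and x :: real
    by simp
  thus ?thesis using assms by (simp add: has_poly_coeffs_def)
qed

lemma power_add_one_diff:
  fixes x :: "'a::comm_ring_1"
  shows "(x + 1) ^ i - x ^ i = (\<Sum>t<i. of_nat (i choose t) * x ^ t)"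
  using binomial_ring[of x 1 i] by (simp add: lessThan_Suc_atMost[symmetric] mult_ac)

lemma has_poly_coeffs_forward_difference:
  assumes "has_poly_coeffs f N a"
  shows "has_poly_coeffs (\<lambda>s. f (Suc s) - f s) N
           (\<lambda>t. \<Sum>i\<le>N. if t < i then a i * real (i choose t) else 0)"
  unfolding has_poly_coeffs_def
proof
  fix s
  have binom: "(1 + real s) ^ i - real s ^ i = (\<Sum>t\<le>N. if t < i then real (i choose t) * real s ^ t else 0)"
    if "i \<le> N" for i
    unfolding add.commute[of 1] power_add_one_diff
    using that by (intro sum.mono_neutral_cong_left) auto
  have "f (Suc s) - f s = (\<Sum>i\<le>N. a i * (real (Suc s) ^ i - real s ^ i))"
    using assms by (simp add: has_poly_coeffs_def sum_subtractf algebra_simps)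
  also have "\<dots> = (\<Sum>i\<le>N. \<Sum>t\<le>N. if t < i then a i * real (i choose t) * real s ^ t else 0)"
    by (auto simp: binom sum_distrib_left intro!: sum.cong)
  also have "\<dots> = (\<Sum>t\<le>N. (\<Sum>i\<le>N. if t < i then a i * real (i choose t) else 0) * real s ^ t)"
    by (subst sum.swap) (auto simp: sum_distrib_right intro!: sum.cong)
  finally show "f (Suc s) - f s = \<dots>" .
qed

lemma sum_powers_recurrence:
  "real (Suc p) * (\<Sum>m<s. real m ^ p)
     = real s ^ Suc p - (\<Sum>q<p. real (Suc p choose q) * (\<Sum>m<s. real m ^ q))"
proof -
  have "real s ^ Suc p = (\<Sum>m<s. real (Suc m) ^ Suc p - real m ^ Suc p)"
    using sum_lessThan_telescope[of "\<lambda>m. real m ^ Suc p" s] by simp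
  also have "\<dots> = (\<Sum>m<s. \<Sum>q\<le>p. real (Suc p choose q) * real m ^ q)"
    unfolding of_nat_Suc add.commute[of 1] power_add_one_diff lessThan_Suc_atMost ..
  also have "\<dots> = (\<Sum>q\<le>p. real (Suc p choose q) * (\<Sum>m<s. real m ^ q))"
    by (subst sum.swap) (simp add: sum_distrib_left)
  finally show ?thesis
    by (simp add: lessThan_Suc_atMost[symmetric])
qed

lemma has_poly_coeffs_sum_powers:
  assumes "p < N"
  shows "\<exists>c. has_poly_coeffs (\<lambda>s. \<Sum>m<s. real m ^ p) N c"
  using assms
proof (induction p rule: less_induct)
  case (less p)
  have "\<forall>q. \<exists>c. q < p \<longrightarrow> has_poly_coeffs (\<lambda>s. \<Sum>m<s. real m ^ q) N c"
    using less by auto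
  then obtain C where C: "\<And>q. q < p \<Longrightarrow> has_poly_coeffs (\<lambda>s. \<Sum>m<s. real m ^ q) N (C q)"
    by metis
  have "has_poly_coeffs (\<lambda>s. 1 / real (Suc p) *
        (real s ^ Suc p + (\<Sum>q<p. - real (Suc p choose q) * (\<Sum>m<s. real m ^ q)))) N
      (\<lambda>i. 1 / real (Suc p) *
        ((if i = Suc p then 1 else 0) + (\<Sum>q<p. - real (Suc p choose q) * C q i)))"
    using less.prems C
    by (intro has_poly_coeffs_cmult has_poly_coeffs_add has_poly_coeffs_power has_poly_coeffs_lincomb) auto
  moreover have "1 / real (Suc p) * (real s ^ Suc p + (\<Sum>q<p. - real (Suc p choose q) * (\<Sum>m<s. real m ^ q)))
      = (\<Sum>m<s. real m ^ p)" for s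
    unfolding sum_negf mult_minus_left add_uminus_conv_diff sum_powers_recurrence[symmetric]
    by (simp del: of_nat_Suc)
  ultimately show ?case by auto
qed

definition bipyramid_count :: "real \<Rightarrow> nat \<Rightarrow> nat \<Rightarrow> real" where
  "bipyramid_count u p s = (u * real s + 1) ^ p + 2 * (\<Sum>m<s. (u * real m + 1) ^ p)"

lemma bipyramid_count_polynomial: "\<exists>a. has_poly_coeffs (bipyramid_count u p) (Suc p) a"
proof -
  have "\<forall>t. \<exists>c. t \<le> p \<longrightarrow> has_poly_coeffs (\<lambda>s. \<Sum>m<s. real m ^ t) (Suc p) c"
    using has_poly_coeffs_sum_powers[of _ "Suc p"] by auto
  then obtain C where C: "\<And>t. t \<le> p \<Longrightarrow> has_poly_coeffs (\<lambda>s. \<Sum>m<s. real m ^ t) (Suc p) (C t)"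
    by metis
  define d where "d t = real (p choose t) * u ^ t" for t
  have expand: "(u * x + 1) ^ p = (\<Sum>t\<le>p. d t * x ^ t)" for x
    using binomial_ring[of "u * x" 1 p] by (simp add: d_def power_mult_distrib mult_ac)
  have "bipyramid_count u p = (\<lambda>s. (\<Sum>t\<le>p. d t * real s ^ t) + (\<Sum>t\<le>p. 2 * d t * (\<Sum>m<s. real m ^ t)))"
    by (simp add: fun_eq_iff bipyramid_count_def expand sum_distrib_left mult.assoc sum.swap[of _ "{..<_}"])
  moreover have "has_poly_coeffs (\<lambda>s. (\<Sum>t\<le>p. d t * real s ^ t) + (\<Sum>t\<le>p. 2 * d t * (\<Sum>m<s. real m ^ t)))
      (Suc p) (\<lambda>i. (\<Sum>t\<le>p. d t * (if i = t then 1 else 0)) + (\<Sum>t\<le>p. 2 * d t * C t i))"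
    by (intro has_poly_coeffs_add has_poly_coeffs_lincomb has_poly_coeffs_power C) auto
  ultimately show ?thesis by auto
qed

lemma bipyramid_count_forward_difference:
  "has_poly_coeffs (\<lambda>s. bipyramid_count u p (Suc s) - bipyramid_count u p s) (Suc p)
     (\<lambda>t. real (p choose t) * u ^ t * ((1 + u) ^ (p - t) + 1))"
  unfolding has_poly_coeffs_def
proof
  fix s
  have "bipyramid_count u p (Suc s) - bipyramid_count u p s = (u * real s + (1 + u)) ^ p + (u * real s + 1) ^ p"
    by (simp add: bipyramid_count_def algebra_simps)
  also have "\<dots> = (\<Sum>t\<le>p. real (p choose t) * u ^ t * ((1 + u) ^ (p - t) + 1) * real s ^ t)"
    unfolding binomial_ring sum.distrib[symmetric]
    by (intro sum.cong refl) (simp add: power_mult_distrib algebra_simps)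
  also have "\<dots> = (\<Sum>t\<le>Suc p. real (p choose t) * u ^ t * ((1 + u) ^ (p - t) + 1) * real s ^ t)"
    by simp
  finally show "bipyramid_count u p (Suc s) - bipyramid_count u p s = \<dots>" .
qed

lemma bipyramid_count_coeff_recurrence:
  assumes "has_poly_coeffs (bipyramid_count u p) (Suc p) a" "t \<le> Suc p"
  shows "(\<Sum>i\<le>Suc p. if t < i then a i * real (i choose t) else 0)
       = real (p choose t) * u ^ t * ((1 + u) ^ (p - t) + 1)"
  using has_poly_coeffs_unique[OF has_poly_coeffs_forward_difference[OF assms(1)]
      bipyramid_count_forward_difference assms(2)] .

lemma sum_atMost_if_less_eq_zero:
  "(n::nat) \<le> t \<Longrightarrow> (\<Sum>i\<le>n. if t < i then f i else 0) = (0::'a::comm_monoid_add)"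
  by (intro sum.neutral ballI) auto

lemma real_choose_Suc_Suc: "real (Suc (Suc q) choose q) = (real q + 2) * (real q + 1) / 2"
  by (simp add: binomial_fact field_simps)

lemma real_choose_Suc_Suc_Suc:
  "real (Suc (Suc (Suc q)) choose q) = (real q + 3) * (real q + 2) * (real q + 1) / 6"
  by (simp add: binomial_fact field_simps numeral_3_eq_3)

lemma real_choose_Suc_Suc_Suc_Suc:
  "real (Suc (Suc (Suc (Suc q))) choose q) = (real q + 4) * (real q + 3) * (real q + 2) * (real q + 1) / 24"
  by (simp add: binomial_fact field_simps fact_numeral)

lemmas bipyramid_count_recurrence_simps = atMost_Suc sum_atMost_if_less_eq_zero
  real_choose_Suc_Suc real_choose_Suc_Suc_Suc real_choose_Suc_Suc_Suc_Suc

lemma bipyramid_count_coeff_top: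
  assumes "has_poly_coeffs (bipyramid_count u p) (Suc p) a"
  shows "a (Suc p) * (real p + 1) = 2 * u ^ p"
  using bipyramid_count_coeff_recurrence[OF assms, of p]
  by (simp add: bipyramid_count_recurrence_simps ac_simps)

lemma bipyramid_count_coeff_second:
  assumes a: "has_poly_coeffs (bipyramid_count u (Suc q)) (Suc (Suc q)) a"
  shows "a (Suc q) = 2 * u ^ q"
proof -
  have top: "a (Suc (Suc q)) * (real q + 2) = 2 * u ^ Suc q"
    using bipyramid_count_coeff_top[OF a] by (simp add: ac_simps)
  have "a (Suc q) * (real q + 1) + a (Suc (Suc q)) * ((real q + 2) * (real q + 1) / 2)
      = (real q + 1) * u ^ q * (2 + u)"
    using bipyramid_count_coeff_recurrence[OF a, of q]
    by (simp add: bipyramid_count_recurrence_simps algebra_simps)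
  also have "a (Suc (Suc q)) * ((real q + 2) * (real q + 1) / 2) = (real q + 1) * u ^ Suc q"
    using arg_cong[OF top, of "\<lambda>x. x * (real q + 1) / 2"] by (simp add: ac_simps)
  finally have "a (Suc q) * (real q + 1) = (2 * u ^ q) * (real q + 1)"
    by (simp add: algebra_simps)
  thus ?thesis by simp
qed

lemma bipyramid_count_coeff_third:
  assumes a: "has_poly_coeffs (bipyramid_count u (Suc (Suc q))) (Suc (Suc (Suc q))) a"
  shows "a (Suc q) = (real q + 2) * u ^ q * (u\<^sup>2 / 6 + 1)"
proof -
  have top: "a (Suc (Suc (Suc q))) * (real q + 3) = 2 * u ^ Suc (Suc q)"
    using bipyramid_count_coeff_top[OF a] by (simp add: ac_simps)
  have second: "a (Suc (Suc q)) = 2 * u ^ Suc q"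
    using bipyramid_count_coeff_second[OF a] .
  have "a (Suc q) * (real q + 1) + a (Suc (Suc q)) * ((real q + 2) * (real q + 1) / 2)
      + a (Suc (Suc (Suc q))) * ((real q + 3) * (real q + 2) * (real q + 1) / 6)
      = (real q + 2) * (real q + 1) / 2 * u ^ q * ((1 + u)\<^sup>2 + 1)"
    using bipyramid_count_coeff_recurrence[OF a, of q]
    by (simp add: bipyramid_count_recurrence_simps field_simps)
  moreover have "a (Suc (Suc (Suc q))) * ((real q + 3) * (real q + 2) * (real q + 1) / 6)
      = (real q + 2) * (real q + 1) / 3 * u ^ Suc (Suc q)"
    using arg_cong[OF top, of "\<lambda>x. x * ((real q + 2) * (real q + 1) / 6)"] by (simp add: ac_simps)
  ultimately have "a (Suc q) * (real q + 1) = (real q + 2) * (real q + 1) / 2 * u ^ q * ((1 + u)\<^sup>2 + 1)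
      - 2 * u ^ Suc q * ((real q + 2) * (real q + 1) / 2) - (real q + 2) * (real q + 1) / 3 * u ^ Suc (Suc q)"
    unfolding second by linarith
  also have "\<dots> = (real q + 1) * ((real q + 2) * u ^ q * (u\<^sup>2 / 6 + 1))"
    by (simp add: field_simps power2_eq_square)
  finally show ?thesis by simp
qed

lemma bipyramid_count_coeff_fourth:
  assumes a: "has_poly_coeffs (bipyramid_count u (Suc (Suc (Suc q)))) (Suc (Suc (Suc (Suc q)))) a"
  shows "a (Suc q) = (real q + 3) * (real q + 2) * u ^ q * (u\<^sup>2 / 6 + 1 / 3)"
proof -
  have top: "a (Suc (Suc (Suc (Suc q)))) * (real q + 4) = 2 * u ^ Suc (Suc (Suc q))"
    using bipyramid_count_coeff_top[OF a] by (simp add: ac_simps)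
  have second: "a (Suc (Suc (Suc q))) = 2 * u ^ Suc (Suc q)"
    using bipyramid_count_coeff_second[OF a] .
  have third: "a (Suc (Suc q)) = (real q + 3) * u ^ Suc q * (u\<^sup>2 / 6 + 1)"
    using bipyramid_count_coeff_third[OF a] by (simp add: ac_simps)
  have "a (Suc q) * (real q + 1) + a (Suc (Suc q)) * ((real q + 2) * (real q + 1) / 2)
      + a (Suc (Suc (Suc q))) * ((real q + 3) * (real q + 2) * (real q + 1) / 6)
      + a (Suc (Suc (Suc (Suc q)))) * ((real q + 4) * (real q + 3) * (real q + 2) * (real q + 1) / 24)
      = (real q + 3) * (real q + 2) * (real q + 1) / 6 * u ^ q * ((1 + u) ^ 3 + 1)"
    using bipyramid_count_coeff_recurrence[OF a, of q]
    by (simp add: bipyramid_count_recurrence_simps field_simps)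
  moreover have "a (Suc (Suc (Suc (Suc q)))) * ((real q + 4) * (real q + 3) * (real q + 2) * (real q + 1) / 24)
      = (real q + 3) * (real q + 2) * (real q + 1) / 12 * u ^ Suc (Suc (Suc q))"
    using arg_cong[OF top, of "\<lambda>x. x * ((real q + 3) * (real q + 2) * (real q + 1) / 24)"]
    by (simp add: ac_simps)
  ultimately have "a (Suc q) * (real q + 1)
      = (real q + 3) * (real q + 2) * (real q + 1) / 6 * u ^ q * ((1 + u) ^ 3 + 1)
        - (real q + 3) * u ^ Suc q * (u\<^sup>2 / 6 + 1) * ((real q + 2) * (real q + 1) / 2)
        - 2 * u ^ Suc (Suc q) * ((real q + 3) * (real q + 2) * (real q + 1) / 6)
        - (real q + 3) * (real q + 2) * (real q + 1) / 12 * u ^ Suc (Suc (Suc q))"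
    unfolding second third by linarith
  also have "\<dots> = (real q + 1) * ((real q + 3) * (real q + 2) * u ^ q * (u\<^sup>2 / 6 + 1 / 3))"
    by (simp add: field_simps power2_eq_square power3_eq_cube)
  finally show ?thesis by simp
qed

definition bipyramid :: "'n::finite \<Rightarrow> nat \<Rightarrow> real \<Rightarrow> (real ^ 'n) set" where
  "bipyramid k l h = {x. \<bar>x $ k\<bar> \<le> h \<and> (\<forall>j. j \<noteq> k \<longrightarrow> \<bar>x $ j\<bar> \<le> real l * (h - \<bar>x $ k\<bar>))}"

lemma convex_bipyramid: "convex (bipyramid k l h)"
  unfolding convex_def
proof (intro ballI allI impI)
  fix x y and u v :: real
  assume x: "x \<in> bipyramid k l h" and y: "y \<in> bipyramid k l h" and uv: "0 \<le> u" "0 \<le> v" "u + v = 1"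
  have comb: "\<bar>u * a + v * b\<bar> \<le> u * \<bar>a\<bar> + v * \<bar>b\<bar>" for a b
    using abs_triangle_ineq[of "u * a" "v * b"] uv by (simp add: abs_mult)
  have "u * \<bar>x $ k\<bar> + v * \<bar>y $ k\<bar> \<le> u * h + v * h"
    using x y uv by (intro add_mono mult_left_mono) (auto simp: bipyramid_def)
  hence k: "\<bar>u * x $ k + v * y $ k\<bar> \<le> h"
    using comb[of "x $ k" "y $ k"] uv by (simp add: distrib_right[symmetric])
  have "\<bar>u * x $ j + v * y $ j\<bar> \<le> real l * (h - \<bar>u * x $ k + v * y $ k\<bar>)" if "j \<noteq> k" for j
  proof -
    have "\<bar>u * x $ j + v * y $ j\<bar> \<le> u * (real l * (h - \<bar>x $ k\<bar>)) + v * (real l * (h - \<bar>y $ k\<bar>))"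
      using comb[of "x $ j" "y $ j"] x y uv that
      by (elim order.trans, intro add_mono mult_left_mono) (auto simp: bipyramid_def)
    also have "\<dots> = real l * ((u + v) * h - (u * \<bar>x $ k\<bar> + v * \<bar>y $ k\<bar>))"
      by (simp add: algebra_simps)
    also have "\<dots> = real l * (h - (u * \<bar>x $ k\<bar> + v * \<bar>y $ k\<bar>))"
      using uv by simp
    also have "\<dots> \<le> real l * (h - \<bar>u * x $ k + v * y $ k\<bar>)"
      using comb[of "x $ k" "y $ k"] by (intro mult_left_mono) auto
    finally show ?thesis .
  qed
  with k show "u *\<^sub>R x + v *\<^sub>R y \<in> bipyramid k l h" by (simp add: bipyramid_def)
qed

lemma Q_poly_eq_bipyramid:
  fixes k :: "'n::finite"
  shows "Q_poly k l = bipyramid k l 1"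
proof
  define S :: "(real ^ 'n) set" where
    "S = {x. x $ k = 0 \<and> (\<forall>j. j \<noteq> k \<longrightarrow> \<bar>x $ j\<bar> \<le> real l)} \<union> {axis k 1, axis k (-1)}"
  have Q: "Q_poly k l = convex hull S"
    unfolding Q_poly_def S_def ..
  show "Q_poly k l \<subseteq> bipyramid k l 1"
    unfolding Q by (intro hull_minimal convex_bipyramid) (auto simp: S_def bipyramid_def axis_def)
  show "bipyramid k l 1 \<subseteq> Q_poly k l"
  proof
    fix x assume x: "x \<in> bipyramid k l 1"
    define h where "h = \<bar>x $ k\<bar>"
    have h: "h \<le> 1" and xj: "\<And>j. j \<noteq> k \<Longrightarrow> \<bar>x $ j\<bar> \<le> real l * (1 - h)"
      using x by (auto simp: bipyramid_def h_def)
    define z :: "real ^ 'n" where "z = axis k (if x $ k \<ge> 0 then 1 else -1)"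
    have z: "z \<in> convex hull S"
      by (rule hull_inc) (simp add: S_def z_def)
    show "x \<in> Q_poly k l"
    proof (cases "h = 1")
      case True
      with xj have "x = z"
        by (auto simp: vec_eq_iff z_def axis_def h_def)
      with z Q show ?thesis by simp
    next
      case False
      with h have h1: "h < 1" by simp
      \<comment> \<open>split x into its projection to the base (rescaled) and the apex on its side\<close>
      define y :: "real ^ 'n" where "y = (\<chi> j. if j = k then 0 else x $ j / (1 - h))"
      have "\<bar>x $ j\<bar> / (1 - h) \<le> real l" if "j \<noteq> k" for j
        using xj[OF that] h1 by (simp add: divide_le_eq mult.commute)
      hence "y \<in> S"
        using h1 by (simp add: S_def y_def)
      hence "(1 - h) *\<^sub>R y + h *\<^sub>R z \<in> convex hull S"
        using z h1 by (intro convexD[OF convex_convex_hull]) (auto simp: h_def hull_inc)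
      moreover have "x = (1 - h) *\<^sub>R y + h *\<^sub>R z"
        using h1 by (auto simp: vec_eq_iff y_def z_def axis_def h_def)
      ultimately show ?thesis
        using Q by simp
    qed
  qed
qed

lemma bipyramid_zero:
  fixes k :: "'n::finite"
  shows "bipyramid k l 0 = {0}"
proof -
  have "x $ j = 0" if x: "x \<in> bipyramid k l 0" for x :: "real ^ 'n" and j
  proof (cases "j = k")
    case False
    with x have "\<bar>x $ j\<bar> \<le> real l * (0 - \<bar>x $ k\<bar>)" and "\<bar>x $ k\<bar> \<le> 0"
      unfolding bipyramid_def by blast+
    thus ?thesis by simp
  qed (use x in \<open>simp add: bipyramid_def\<close>)
  hence "bipyramid k l 0 \<subseteq> {0}" by (auto simp: vec_eq_iff)
  moreover have "0 \<in> bipyramid k l 0" by (simp add: bipyramid_def)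
  ultimately show ?thesis by blast
qed

lemma scaleR_mem_bipyramid:
  assumes "0 < c"
  shows "c *\<^sub>R x \<in> bipyramid k l (c * h) \<longleftrightarrow> x \<in> bipyramid k l h"
proof -
  have scale: "c * \<bar>a\<bar> \<le> real l * (c * h - c * b) \<longleftrightarrow> \<bar>a\<bar> \<le> real l * (h - b)" for a b
    unfolding right_diff_distrib[symmetric] mult.left_commute[of "real l" c] using assms by simp
  show ?thesis
    using assms by (simp add: bipyramid_def abs_mult scale)
qed

lemma scaleR_bipyramid:
  assumes "0 \<le> c"
  shows "(\<lambda>v. c *\<^sub>R v) ` bipyramid k l 1 = bipyramid k l c"
proof (cases "c = 0")
  case True
  have "0 \<in> bipyramid k l 1" by (simp add: bipyramid_def)
  thus ?thesis using True by (auto simp: bipyramid_zero)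
next
  case False
  with assms have c: "0 < c" by simp
  show ?thesis
  proof (intro equalityI subsetI)
    fix x assume "x \<in> bipyramid k l c"
    hence "c *\<^sub>R ((1 / c) *\<^sub>R x) \<in> bipyramid k l (c * 1)" using c by simp
    hence "(1 / c) *\<^sub>R x \<in> bipyramid k l 1" using scaleR_mem_bipyramid[OF c] by blast
    moreover have "x = c *\<^sub>R ((1 / c) *\<^sub>R x)" using c by simp
    ultimately show "x \<in> (\<lambda>v. c *\<^sub>R v) ` bipyramid k l 1" by blast
  qed (use scaleR_mem_bipyramid[OF c, of _ k l 1] in auto)
qed

lemma int_lattice_eq_range: "int_lattice = range (\<lambda>f. \<chi> j. real_of_int (f j))"
proof (intro equalityI subsetI)
  fix x :: "real ^ 'n" assume "x \<in> int_lattice"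
  hence "x = (\<chi> j. real_of_int \<lfloor>x $ j\<rfloor>)"
    by (auto simp: int_lattice_def vec_eq_iff elim!: Ints_cases)
  thus "x \<in> range (\<lambda>f. \<chi> j. real_of_int (f j))"
    using range_eqI[of x "\<lambda>f. \<chi> j. real_of_int (f j)" "\<lambda>j. \<lfloor>x $ j\<rfloor>"] by simp
qed (auto simp: int_lattice_def)

definition int_bipyramid :: "'n::finite \<Rightarrow> nat \<Rightarrow> nat \<Rightarrow> ('n \<Rightarrow> int) set" where
  "int_bipyramid k l s = {f. \<bar>f k\<bar> \<le> int s \<and> (\<forall>j. j \<noteq> k \<longrightarrow> \<bar>f j\<bar> \<le> int l * (int s - \<bar>f k\<bar>))}"

lemma card_bipyramid_int_lattice:
  fixes k :: "'n::finite"
  shows "card (bipyramid k l (real s) \<inter> int_lattice) = card (int_bipyramid k l s)"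
proof -
  define g :: "('n \<Rightarrow> int) \<Rightarrow> real ^ 'n" where "g f = (\<chi> j. real_of_int (f j))" for f
  have "g f \<in> bipyramid k l (real s) \<longleftrightarrow> f \<in> int_bipyramid k l s" for f
  proof -
    have "\<bar>real_of_int (f j)\<bar> \<le> real l * (real s - \<bar>real_of_int (f k)\<bar>)
        \<longleftrightarrow> real_of_int \<bar>f j\<bar> \<le> real_of_int (int l * (int s - \<bar>f k\<bar>))" for j
      by simp
    moreover have "\<bar>real_of_int (f k)\<bar> \<le> real s \<longleftrightarrow> real_of_int \<bar>f k\<bar> \<le> real_of_int (int s)"
      by simp
    ultimately show ?thesis
      unfolding of_int_le_iff by (simp add: g_def bipyramid_def int_bipyramid_def)
  qed
  hence "bipyramid k l (real s) \<inter> int_lattice = g ` int_bipyramid k l s"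
    unfolding int_lattice_eq_range g_def[symmetric] by auto
  moreover have "inj g"
    by (auto simp: inj_def g_def vec_eq_iff fun_eq_iff)
  ultimately show ?thesis
    by (simp add: card_image inj_on_subset)
qed

lemma card_int_bipyramid:
  fixes k :: "'n::finite"
  shows "real (card (int_bipyramid k l s))
       = (\<Sum>h\<in>{-int s..int s}. (2 * real l * (real s - \<bar>real_of_int h\<bar>) + 1) ^ (CARD('n) - 1))"
proof -
  define M where "M h = int l * (int s - \<bar>h\<bar>)" for h
  define Sig where "Sig = Sigma {-int s..int s} (\<lambda>h. PiE (-{k}) (\<lambda>_. {-M h..M h}))"
  \<comment> \<open>a point is its height together with its restriction to the other coordinates\<close>
  have "bij_betw (\<lambda>f. (f k, restrict f (-{k}))) (int_bipyramid k l s) Sig"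
    by (rule bij_betw_byWitness[where f' = "\<lambda>(h, g). g(k := h)"])
       (auto simp: Sig_def int_bipyramid_def M_def PiE_def Pi_def extensional_def fun_eq_iff abs_le_iff
             split: if_splits)
  hence "card (int_bipyramid k l s) = card Sig" by (rule bij_betw_same_card)
  also have "\<dots> = (\<Sum>h\<in>{-int s..int s}. nat (2 * M h + 1) ^ (CARD('n) - 1))"
    unfolding Sig_def
    by (subst card_SigmaI)
       (auto simp: card_PiE card_Diff_singleton Compl_eq_Diff_UNIV intro!: sum.cong finite_PiE)
  finally have "real (card (int_bipyramid k l s))
      = (\<Sum>h\<in>{-int s..int s}. real (nat (2 * M h + 1)) ^ (CARD('n) - 1))"
    by simp
  also have "\<dots> = (\<Sum>h\<in>{-int s..int s}. (2 * real l * (real s - \<bar>real_of_int h\<bar>) + 1) ^ (CARD('n) - 1))"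
  proof (intro sum.cong refl)
    fix h assume "h \<in> {-int s..int s}"
    hence "0 \<le> M h" by (simp add: M_def abs_le_iff)
    thus "real (nat (2 * M h + 1)) ^ (CARD('n) - 1) = (2 * real l * (real s - \<bar>real_of_int h\<bar>) + 1) ^ (CARD('n) - 1)"
      by (simp add: M_def mult.assoc)
  qed
  finally show ?thesis .
qed

lemma sum_symmetric_interval:
  fixes f :: "nat \<Rightarrow> 'a::comm_semiring_1"
  shows "(\<Sum>h\<in>{-int s..int s}. f (nat \<bar>h\<bar>)) = f 0 + 2 * (\<Sum>m\<in>{1..s}. f m)"
proof (induction s)
  case (Suc s)
  have "{-int (Suc s)..int (Suc s)} = insert (int (Suc s)) (insert (-int (Suc s)) {-int s..int s})"
    by auto
  hence "(\<Sum>h\<in>{-int (Suc s)..int (Suc s)}. f (nat \<bar>h\<bar>))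
      = f (Suc s) + (f (Suc s) + (\<Sum>h\<in>{-int s..int s}. f (nat \<bar>h\<bar>)))"
    by (simp add: add.commute[of 1] flip: of_nat_Suc)
  also have "\<dots> = f 0 + 2 * ((\<Sum>m\<in>{1..s}. f m) + f (Suc s))"
    unfolding Suc.IH by (simp only: mult_2 distrib_right ac_simps)
  finally show ?case by simp
qed simp

lemma lattice_count_Q_poly:
  fixes k :: "'n::finite"
  shows "real (lattice_count ((\<lambda>v. real s *\<^sub>R v) ` Q_poly k l))
       = bipyramid_count (2 * real l) (CARD('n) - 1) s"
proof -
  define f where "f m = (2 * real l * (real s - real m) + 1) ^ (CARD('n) - 1)" for m
  have "real (lattice_count ((\<lambda>v. real s *\<^sub>R v) ` Q_poly k l)) = (\<Sum>h\<in>{-int s..int s}. f (nat \<bar>h\<bar>))"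
    unfolding lattice_count_def Q_poly_eq_bipyramid scaleR_bipyramid[OF of_nat_0_le_iff]
      card_bipyramid_int_lattice card_int_bipyramid f_def
    by (intro sum.cong refl) simp
  also have "\<dots> = f 0 + 2 * (\<Sum>m\<in>{1..s}. f m)"
    by (rule sum_symmetric_interval)
  also have "(\<Sum>m\<in>{1..s}. f m) = (\<Sum>m<s. (2 * real l * real m + 1) ^ (CARD('n) - 1))"
    by (rule sum.reindex_bij_witness[where i = "\<lambda>m. s - m" and j = "\<lambda>m. s - m"])
       (auto simp: f_def of_nat_diff)
  finally show ?thesis
    by (simp add: f_def bipyramid_count_def)
qed

lemma ehrhart_coeff_eqI:
  fixes P :: "(real ^ 'n::finite) set"
  assumes "has_poly_coeffs (\<lambda>s. real (lattice_count ((\<lambda>v. real s *\<^sub>R v) ` P))) CARD('n) a"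
    and "i \<le> CARD('n)"
  shows "ehrhart_coeff P i = a i"
  unfolding ehrhart_coeff_def
proof (rule the_equality)
  show "\<exists>b. (\<forall>s::nat. real (lattice_count ((\<lambda>v. real s *\<^sub>R v) ` P)) = (\<Sum>j\<le>CARD('n). b j * real s ^ j))
            \<and> b i = a i"
    using assms(1) unfolding has_poly_coeffs_def by blast
next
  fix c
  assume "\<exists>b. (\<forall>s::nat. real (lattice_count ((\<lambda>v. real s *\<^sub>R v) ` P)) = (\<Sum>j\<le>CARD('n). b j * real s ^ j))
            \<and> b i = c"
  then obtain b where "has_poly_coeffs (\<lambda>s. real (lattice_count ((\<lambda>v. real s *\<^sub>R v) ` P))) CARD('n) b"
    and "b i = c"
    unfolding has_poly_coeffs_def by blast
  with has_poly_coeffs_unique[OF _ assms] show "c = a i" by metis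
qed

lemma ehrhart_coeff_Q_poly:
  fixes k :: "'n::finite"
  assumes "CARD('n) = Suc p" "has_poly_coeffs (bipyramid_count (2 * real l) p) (Suc p) a" "i \<le> Suc p"
  shows "ehrhart_coeff (Q_poly k l) i = a i"
  using assms by (intro ehrhart_coeff_eqI) (simp_all add: lattice_count_Q_poly)

lemma aff_dim_int_lattice_full:
  fixes K :: "(real ^ 'n::finite) set"
  assumes "0 \<in> K" "Basis \<subseteq> K"
  shows "aff_dim (K \<inter> int_lattice) = CARD('n)"
proof -
  have "0 \<in> int_lattice" "Basis \<subseteq> int_lattice"
    by (auto simp: int_lattice_def Basis_vec_def axis_def)
  with assms have "0 \<in> K \<inter> int_lattice" "Basis \<subseteq> K \<inter> int_lattice" by auto
  hence "span (K \<inter> int_lattice) = UNIV"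
    using span_mono[of Basis "K \<inter> int_lattice"] by (simp add: span_Basis top.extremum_unique)
  hence "dim (K \<inter> int_lattice) = DIM(real ^ 'n)"
    by (rule iffD2[OF dim_eq_full])
  moreover have "aff_dim (K \<inter> int_lattice) = int (dim ((+) (- 0) ` (K \<inter> int_lattice)))"
    using \<open>0 \<in> K \<inter> int_lattice\<close> by (intro aff_dim_eq_dim hull_inc)
  ultimately show ?thesis by simp
qed

lemma succ_min_ge:
  fixes K :: "(real ^ 'n::finite) set"
  assumes "0 \<in> K" "Basis \<subseteq> K" and bound: "\<And>x i. x \<in> K \<Longrightarrow> \<bar>x $ i\<bar> \<le> R"
    and j: "1 \<le> j" "j \<le> CARD('n)"
  shows "1 / R \<le> succ_min K j"
proof -
  define S where "S = {t. t > 0 \<and> aff_dim (((\<lambda>v. t *\<^sub>R v) ` K) \<inter> int_lattice) \<ge> int j}"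
  have one: "1 \<in> S"
    using aff_dim_int_lattice_full[OF assms(1,2)] j by (simp add: S_def)
  have lower: "1 / R \<le> t" if "t \<in> S" for t
  proof (rule ccontr)
    assume "\<not> 1 / R \<le> t"
    moreover have "0 < t" using that by (simp add: S_def)
    moreover have "0 < R"
      using bound[of "axis undefined 1" undefined] assms(2) by (force simp: Basis_vec_def)
    ultimately have tR: "t * R < 1" by (simp add: field_simps)
    \<comment> \<open>the dilate \<open>t K\<close> lies in the open unit cube, so it meets the lattice only in 0\<close>
    have "((\<lambda>v. t *\<^sub>R v) ` K) \<inter> int_lattice \<subseteq> {0}"
    proof
      fix y assume "y \<in> ((\<lambda>v. t *\<^sub>R v) ` K) \<inter> int_lattice"
      then obtain x where x: "x \<in> K" and y: "y = t *\<^sub>R x" and "y \<in> int_lattice" by auto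
      have "y $ i = 0" for i
      proof (rule Ints_nonzero_abs_less1)
        show "y $ i \<in> \<int>" using \<open>y \<in> int_lattice\<close> by (simp add: int_lattice_def)
        have "\<bar>y $ i\<bar> \<le> t * R"
          using bound[OF x, of i] \<open>0 < t\<close> by (simp add: y abs_mult)
        with tR show "\<bar>y $ i\<bar> < 1" by simp
      qed
      thus "y \<in> {0}" by (simp add: vec_eq_iff)
    qed
    hence "aff_dim (((\<lambda>v. t *\<^sub>R v) ` K) \<inter> int_lattice) \<le> aff_dim {0 :: real ^ 'n}"
      by (rule aff_dim_subset)
    with that j show False by (simp add: S_def)
  qed
  have "1 / R \<le> Inf S"
    using one by (intro cInf_greatest lower) auto
  thus ?thesis by (simp add: succ_min_def S_def)
qed

lemma elem_sym_bounds:
  assumes "\<And>j. j \<in> {1..n} \<Longrightarrow> 0 \<le> x j \<and> x j \<le> B"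
  shows "0 \<le> elem_sym n x i" and "elem_sym n x i \<le> real (n choose i) * B ^ i"
proof -
  define F where "F = {I. I \<subseteq> {1..n} \<and> card I = i}"
  have "card F = n choose i"
    unfolding F_def using n_subsets[of "{1..n}" i] by simp
  have prod: "0 \<le> (\<Prod>j\<in>I. x j) \<and> (\<Prod>j\<in>I. x j) \<le> B ^ i" if "I \<in> F" for I
  proof -
    have I: "I \<subseteq> {1..n}" "card I = i" using that by (auto simp: F_def)
    have "0 \<le> (\<Prod>j\<in>I. x j)" using I assms by (intro prod_nonneg) auto
    moreover have "(\<Prod>j\<in>I. x j) \<le> (\<Prod>j\<in>I. B)" using I assms by (intro prod_mono) auto
    ultimately show ?thesis using I by simp
  qed
  show "0 \<le> elem_sym n x i"
    unfolding elem_sym_def F_def[symmetric] using prod by (intro sum_nonneg) auto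
  have "elem_sym n x i \<le> real (card F) * B ^ i"
    unfolding elem_sym_def F_def[symmetric] using prod by (intro sum_bounded_above) auto
  with \<open>card F = n choose i\<close> show "elem_sym n x i \<le> real (n choose i) * B ^ i" by simp
qed

lemma Q_poly_coordinate_bound:
  assumes "x \<in> Q_poly k l" "1 \<le> l"
  shows "\<bar>x $ i\<bar> \<le> real l"
proof (cases "i = k")
  case False
  with assms have "\<bar>x $ i\<bar> \<le> real l * (1 - \<bar>x $ k\<bar>)" "\<bar>x $ k\<bar> \<le> 1"
    unfolding Q_poly_eq_bipyramid bipyramid_def by blast+
  thus ?thesis using mult_left_le[of "1 - \<bar>x $ k\<bar>" "real l"] by simp
qed (use assms in \<open>auto simp: Q_poly_eq_bipyramid bipyramid_def\<close>)

lemma diff_body_Q_poly_contains_Basis: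
  fixes k :: "'n::finite"
  assumes "1 \<le> l"
  shows "0 \<in> diff_body (Q_poly k l)" and "Basis \<subseteq> diff_body (Q_poly k l)"
proof -
  have zero: "0 \<in> Q_poly k l" by (simp add: Q_poly_eq_bipyramid bipyramid_def)
  thus "0 \<in> diff_body (Q_poly k l)" unfolding diff_body_def by force
  have "axis i 1 \<in> Q_poly k l" for i
    using assms by (auto simp: Q_poly_eq_bipyramid bipyramid_def axis_def)
  with zero show "Basis \<subseteq> diff_body (Q_poly k l)"
    unfolding diff_body_def Basis_vec_def by force
qed

lemma sigma_sm_Q_poly_bounds:
  fixes k :: "'n::finite"
  assumes "1 \<le> l"
  shows "0 \<le> sigma_sm (Q_poly k l) i"
    and "sigma_sm (Q_poly k l) i \<le> real (CARD('n) choose i) * (2 * real l) ^ i"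
proof -
  have bound: "\<bar>x $ i\<bar> \<le> 2 * real l" if x: "x \<in> diff_body (Q_poly k l)" for x i
  proof -
    obtain y z where "x = y - z" and y: "y \<in> Q_poly k l" and z: "z \<in> Q_poly k l"
      using x unfolding diff_body_def by blast
    thus ?thesis
      using Q_poly_coordinate_bound[OF y assms, of i] Q_poly_coordinate_bound[OF z assms, of i]
        abs_triangle_ineq4[of "y $ i" "z $ i"] by simp
  qed
  have recip: "0 \<le> 1 / succ_min (diff_body (Q_poly k l)) j \<and> 1 / succ_min (diff_body (Q_poly k l)) j \<le> 2 * real l"
    if "j \<in> {1..CARD('n)}" for j
  proof -
    define m where "m = succ_min (diff_body (Q_poly k l)) j"
    have m: "1 / (2 * real l) \<le> m"
      unfolding m_def using that by (intro succ_min_ge[OF diff_body_Q_poly_contains_Basis[OF assms] bound]) auto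
    have l: "0 < 2 * real l" using assms by simp
    hence "0 < m" using m by (meson divide_pos_pos less_le_trans zero_less_one)
    moreover have "1 \<le> m * (2 * real l)" using m pos_divide_le_eq[OF l] by blast
    ultimately show ?thesis
      unfolding m_def[symmetric] by (simp add: pos_divide_le_eq mult.commute)
  qed
  show "0 \<le> sigma_sm (Q_poly k l) i"
    unfolding sigma_sm_def using recip by (rule elem_sym_bounds)
  show "sigma_sm (Q_poly k l) i \<le> real (CARD('n) choose i) * (2 * real l) ^ i"
    unfolding sigma_sm_def using recip by (rule elem_sym_bounds)
qed

lemma ehrhart_coeff_Q_poly_codim2:
  fixes k :: "'n::finite"
  assumes "CARD('n) = Suc (Suc (Suc q))"
  shows "ehrhart_coeff (Q_poly k l) (Suc q) = (real q + 2) * (2 * real l) ^ q * ((2 * real l)\<^sup>2 / 6 + 1)"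
proof -
  obtain a where a: "has_poly_coeffs (bipyramid_count (2 * real l) (Suc (Suc q))) (Suc (Suc (Suc q))) a"
    using bipyramid_count_polynomial by blast
  show ?thesis
    using ehrhart_coeff_Q_poly[OF assms a] bipyramid_count_coeff_third[OF a] by simp
qed

lemma ehrhart_coeff_Q_poly_codim3:
  fixes k :: "'n::finite"
  assumes "CARD('n) = Suc (Suc (Suc (Suc q)))"
  shows "ehrhart_coeff (Q_poly k l) (Suc q)
       = (real q + 3) * (real q + 2) * (2 * real l) ^ q * ((2 * real l)\<^sup>2 / 6 + 1 / 3)"
proof -
  obtain a where a: "has_poly_coeffs (bipyramid_count (2 * real l) (Suc (Suc (Suc q)))) (Suc (Suc (Suc (Suc q)))) a"
    using bipyramid_count_polynomial by blast
  show ?thesis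
    using ehrhart_coeff_Q_poly[OF assms a] bipyramid_count_coeff_fourth[OF a] by simp
qed

lemma ehrhart_coeff_Q_poly_codim2_ge:
  fixes k :: "'n::finite"
  assumes "CARD('n) = Suc (Suc (Suc q))"
  shows "(2 * real l) ^ Suc (Suc q) / 3 \<le> ehrhart_coeff (Q_poly k l) (Suc q)"
proof -
  have "(2 * real l) ^ Suc (Suc q) / 3 = 2 * (2 * real l) ^ q * ((2 * real l)\<^sup>2 / 6)"
    by (simp add: power2_eq_square)
  also have "\<dots> \<le> (real q + 2) * (2 * real l) ^ q * ((2 * real l)\<^sup>2 / 6 + 1)"
    by (intro mult_mono) auto
  finally show ?thesis
    unfolding ehrhart_coeff_Q_poly_codim2[OF assms] .
qed

lemma ehrhart_coeff_Q_poly_codim3_ge: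
  fixes k :: "'n::finite"
  assumes "CARD('n) = Suc (Suc (Suc (Suc q)))"
  shows "(2 * real l) ^ Suc (Suc q) / 3 \<le> ehrhart_coeff (Q_poly k l) (Suc q)"
proof -
  have "(2 * real l) ^ Suc (Suc q) / 3 \<le> 6 * (2 * real l) ^ q * ((2 * real l)\<^sup>2 / 6)"
    by (simp add: power2_eq_square)
  also have "\<dots> \<le> ((real q + 3) * (real q + 2)) * (2 * real l) ^ q * ((2 * real l)\<^sup>2 / 6 + 1 / 3)"
    using mult_mono[of 3 "real q + 3" 2 "real q + 2"] by (intro mult_mono) auto
  finally show ?thesis
    unfolding ehrhart_coeff_Q_poly_codim3[OF assms] by simp
qed

lemma exists_gt_mult_if_faster_growth:
  fixes g \<sigma> :: "nat \<Rightarrow> real"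
  assumes \<sigma>_nonneg: "\<And>l. 1 \<le> l \<Longrightarrow> 0 \<le> \<sigma> l"
    and \<sigma>_le: "\<And>l. 1 \<le> l \<Longrightarrow> \<sigma> l \<le> B * (2 * real l) ^ i"
    and g: "\<And>l. 1 \<le> l \<Longrightarrow> (2 * real l) ^ Suc i / 3 \<le> g l"
  shows "\<exists>l\<ge>1. c * \<sigma> l < g l"
proof -
  obtain N :: nat where N: "3 * \<bar>c\<bar> * B < real N"
    using reals_Archimedean2 by blast
  define u where "u = 2 * real (Suc N)"
  have "0 < u" "3 * \<bar>c\<bar> * B < u" using N by (simp_all add: u_def)
  have "c * \<sigma> (Suc N) \<le> \<bar>c\<bar> * \<sigma> (Suc N)"
    using \<sigma>_nonneg[of "Suc N"] by (intro mult_right_mono) auto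
  also have "\<dots> \<le> \<bar>c\<bar> * (B * u ^ i)"
    using \<sigma>_le[of "Suc N"] by (intro mult_left_mono) (auto simp: u_def)
  also have "\<dots> = (3 * \<bar>c\<bar> * B) * u ^ i / 3" by simp
  also have "\<dots> < u * u ^ i / 3"
    using \<open>0 < u\<close> \<open>3 * \<bar>c\<bar> * B < u\<close> by (simp add: divide_strict_right_mono)
  also have "\<dots> \<le> g (Suc N)"
    using g[of "Suc N"] by (simp add: u_def)
  finally show ?thesis by (intro exI[of _ "Suc N"]) simp
qed

theorem proposition1p3:
  fixes k :: "'n::finite"
  assumes "CARD('n) \<ge> 3"
  shows "(\<forall>c::real. \<exists>l::nat. l \<ge> 1 \<and>
            ehrhart_coeff (Q_poly k l) (CARD('n) - 2) > c * sigma_sm (Q_poly k l) (CARD('n) - 2))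
       \<and> (CARD('n) \<ge> 4 \<longrightarrow> (\<forall>c::real. \<exists>l::nat. l \<ge> 1 \<and>
            ehrhart_coeff (Q_poly k l) (CARD('n) - 3) > c * sigma_sm (Q_poly k l) (CARD('n) - 3)))"
proof (intro conjI allI impI)
  fix c :: real
  define q where "q = CARD('n) - 3"
  with assms have n: "CARD('n) = Suc (Suc (Suc q))" by simp
  from exists_gt_mult_if_faster_growth[OF sigma_sm_Q_poly_bounds[where k = k]
      ehrhart_coeff_Q_poly_codim2_ge[OF n, where k = k], where c = c]
  show "\<exists>l\<ge>1. c * sigma_sm (Q_poly k l) (CARD('n) - 2) < ehrhart_coeff (Q_poly k l) (CARD('n) - 2)"
    by (simp add: n)
next
  fix c :: real
  assume "CARD('n) \<ge> 4"
  define q where "q = CARD('n) - 4"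
  with \<open>CARD('n) \<ge> 4\<close> have n: "CARD('n) = Suc (Suc (Suc (Suc q)))" by simp
  from exists_gt_mult_if_faster_growth[OF sigma_sm_Q_poly_bounds[where k = k]
      ehrhart_coeff_Q_poly_codim3_ge[OF n, where k = k], where c = c]
  show "\<exists>l\<ge>1. c * sigma_sm (Q_poly k l) (CARD('n) - 3) < ehrhart_coeff (Q_poly k l) (CARD('n) - 3)"
    by (simp add: n)
qed

end
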